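(* Let $I=\{1,2\}$, $A=\{x,y,z\}$ with $x,y,z$ pairwise distinct, and let $\mathcal C=\mathcal C(I,A,(\rho_i)_{i\in I},(C^a)_{a\in A})$ be a Cartan scheme with $\rho_1(x)=y$, $\rho_1(y)=x$, $\rho_1(z)=z$, $\rho_2(x)=x$, $\rho_2(y)=z$, $\rho_2(z)=y$. Let $a,b,c,d\in\mathbb N_0$ with $a\le d$ such that $C^x=\begin{pmatrix}2&-a\\-c&2\end{pmatrix}$, $C^y=\begin{pmatrix}2&-a\\-d&2\end{pmatrix}$, $C^z=\begin{pmatrix}2&-b\\-d&2\end{pmatrix}$, and let $\mathcal R=\mathcal R(\mathcal C,(R^a)_{a\in A})$ be a root system of type $\mathcal C$. If $\mathcal R$ is finite, then $(a,b,c,d)$ and $R^x$ satisfy one of: (1) $(a,b,c,d)=(1,1,1,1)$, $|R^x_+|=3$; (2) $(1,1,3,3)$, $|R^x_+|=6$; (3) $(1,2,4,2)$, $|R^x_+|=6$; (4) $(1,3,6,2)$, $|R^x_+|=12$; (5) $(1,4,5,2)$, $|R^x_+|=12$; (6) $(1,3,7,2)$, $|R^x_+|=18$; (7) $(1,5,5,2)$, $|R^x_+|=18$. Conversely, if $(a,b,c,d)$ is one of these seven quadruples, then $\mathcal R$ is finite.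
   Context: Let $I$ be a nonempty finite set and $\{\alpha_i\mid i\in I\}$ the standard basis of $\mathbb Z^I$; $\mathbb N_0=\{0,1,2,\dots\}$. A generalized Cartan matrix is $C=(c_{ij})_{i,j\in I}\in\mathbb Z^{I\times I}$ with $c_{ii}=2$, $c_{jk}\le0$ for $j\ne k$, and $c_{ij}=0\Rightarrow c_{ji}=0$. A Cartan scheme $\mathcal C=\mathcal C(I,A,(\rho_i)_{i\in I},(C^a)_{a\in A})$ consists of a nonempty set $A$, maps $\rho_i:A\to A$ and generalized Cartan matrices $C^a=(c^a_{jk})_{j,k\in I}$ such that (C1) $\rho_i^2=\mathrm{id}$ and (C2) $c^a_{ij}=c^{\rho_i(a)}_{ij}$ for all $a\in A$, $i,j\in I$. For $i\in I$, $a\in A$ let $\sigma_i^a\in\mathrm{Aut}(\mathbb Z^I)$, $\sigma_i^a(\alpha_j)=\alpha_j-c^a_{ij}\alpha_i$. A root system of type $\mathcal C$ is a family $\mathcal R=\mathcal R(\mathcal C,(R^a)_{a\in A})$ of subsets $R^a\subset\mathbb Z^I$ such that, writing $R^a_+=R^a\cap\mathbb N_0^I$ and $m^a_{i,j}=|R^a\cap(\mathbb N_0\alpha_i+\mathbb N_0\alpha_j)|$, for all $a\in A$, $i,j\in I$: (R1) $R^a=R^a_+\cup(-R^a_+)$; (R2) $R^a\cap\mathbb Z\alpha_i=\{\alpha_i,-\alpha_i\}$; (R3) $\sigma_i^a(R^a)=R^{\rho_i(a)}$; (R4) if $i\neq j$ and $m^a_{i,j}$ is finite then $(\rho_i\rho_j)^{m^a_{i,j}}(a)=a$.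 It is finite if every $R^a$ is finite. *)

theory Defs
  imports Main
begin

definition zvec :: "'i set \<Rightarrow> ('i \<Rightarrow> int) set" where
  "zvec I = {v. \<forall>k. k \<notin> I \<longrightarrow> v k = 0}"

definition nvec :: "'i set \<Rightarrow> ('i \<Rightarrow> int) set" where
  "nvec I = {v \<in> zvec I. \<forall>k\<in>I. 0 \<le> v k}"

definition alpha :: "'i \<Rightarrow> 'i \<Rightarrow> int" where
  "alpha i = (\<lambda>k. if k = i then 1 else 0)"

definition gcm :: "'i set \<Rightarrow> ('i \<Rightarrow> 'i \<Rightarrow> int) \<Rightarrow> bool" where
  "gcm I M \<longleftrightarrow> (\<forall>i\<in>I. M i i = 2) \<and> (\<forall>j\<in>I. \<forall>k\<in>I. j \<noteq> k \<longrightarrow> M j k \<le> 0)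
     \<and> (\<forall>i\<in>I. \<forall>j\<in>I. M i j = 0 \<longrightarrow> M j i = 0)"

text \<open>Cartan scheme: C a i j is the entry c^a_{ij}.\<close>
definition cartan_scheme ::
  "'i set \<Rightarrow> 'a set \<Rightarrow> ('i \<Rightarrow> 'a \<Rightarrow> 'a) \<Rightarrow> ('a \<Rightarrow> 'i \<Rightarrow> 'i \<Rightarrow> int) \<Rightarrow> bool" where
  "cartan_scheme I A rho C \<longleftrightarrow> finite I \<and> I \<noteq> {} \<and> A \<noteq> {}
     \<and> (\<forall>i\<in>I. \<forall>a\<in>A. rho i a \<in> A \<and> rho i (rho i a) = a)
     \<and> (\<forall>a\<in>A. gcm I (C a))
     \<and> (\<forall>a\<in>A. \<forall>i\<in>I. \<forall>j\<in>I. C a i j = C (rho i a) i j)"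

text \<open>sigma_i^a, the linear map with alpha_j |-> alpha_j - c^a_{ij} alpha_i.\<close>
definition sigma :: "'i set \<Rightarrow> ('a \<Rightarrow> 'i \<Rightarrow> 'i \<Rightarrow> int) \<Rightarrow> 'i \<Rightarrow> 'a \<Rightarrow> ('i \<Rightarrow> int) \<Rightarrow> ('i \<Rightarrow> int)" where
  "sigma I C i a v = (\<lambda>k. v k - (\<Sum>j\<in>I. v j * C a i j) * alpha i k)"

definition pos_roots :: "'i set \<Rightarrow> ('i \<Rightarrow> int) set \<Rightarrow> ('i \<Rightarrow> int) set" where
  "pos_roots I S = S \<inter> nvec I"

definition span2 :: "'i \<Rightarrow> 'i \<Rightarrow> ('i \<Rightarrow> int) set" where
  "span2 i j = {v. \<exists>s t. 0 \<le> s \<and> 0 \<le> t \<and> v = (\<lambda>k. s * alpha i k + t * alpha j k)}"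

definition root_system ::
  "'i set \<Rightarrow> 'a set \<Rightarrow> ('i \<Rightarrow> 'a \<Rightarrow> 'a) \<Rightarrow> ('a \<Rightarrow> 'i \<Rightarrow> 'i \<Rightarrow> int)
    \<Rightarrow> ('a \<Rightarrow> ('i \<Rightarrow> int) set) \<Rightarrow> bool" where
  "root_system I A rho C R \<longleftrightarrow> cartan_scheme I A rho C
     \<and> (\<forall>a\<in>A. R a \<subseteq> zvec I)
     \<and> (\<forall>a\<in>A. R a = pos_roots I (R a) \<union> (\<lambda>v k. - v k) ` pos_roots I (R a))
     \<and> (\<forall>a\<in>A. \<forall>i\<in>I. R a \<inter> {(\<lambda>k. n * alpha i k) | n. True} = {alpha i, (\<lambda>k. - alpha i k)})
     \<and> (\<forall>a\<in>A. \<forall>i\<in>I. sigma I C i a ` R a = R (rho i a))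
     \<and> (\<forall>a\<in>A. \<forall>i\<in>I. \<forall>j\<in>I. i \<noteq> j \<longrightarrow> finite (R a \<inter> span2 i j)
          \<longrightarrow> ((rho i \<circ> rho j) ^^ card (R a \<inter> span2 i j)) a = a)"

definition finite_root_system :: "'a set \<Rightarrow> ('a \<Rightarrow> ('i \<Rightarrow> int) set) \<Rightarrow> bool" where
  "finite_root_system A R \<longleftrightarrow> (\<forall>a\<in>A. finite (R a))"

end

theory Submission
  imports Defs "HOL-Library.Product_Plus"
begin

text \<open>Project each \<open>R\<^sup>a\<close> to \<open>\<int>\<^sup>2\<close> and follow the path \<open>x, y, z, z, y, x, \<dots>\<close> obtained by reflecting
  alternately in \<open>\<alpha>\<^sub>1\<close> and \<open>\<alpha>\<^sub>2\<close>. Transported back to \<open>x\<close>, the simple roots met along the path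
  form, up to sign, the sequence \<open>v\<^sub>0 = -\<alpha>\<^sub>2\<close>, \<open>v\<^sub>1 = \<alpha>\<^sub>1\<close>, \<open>v\<^sub>k\<^sub>+\<^sub>1 = q\<^sub>k v\<^sub>k - v\<^sub>k\<^sub>-\<^sub>1\<close>, where \<open>q\<close> is the 6-periodic sequence
  of Cartan entries met on the way; since roots are sign-coherent and \<open>\<alpha>\<^sub>i\<close> are the only roots on
  the axes, the positive roots of \<open>R\<^sup>x\<close> are exactly \<open>v\<^sub>1, \<dots>, v\<^sub>m = \<alpha>\<^sub>2\<close>, and \<open>R\<close> is finite iff the
  sequence reaches \<open>\<alpha>\<^sub>2\<close> while staying positive. Such a sequence is a Conway--Coxeter quiddity
  chain, so \<open>q\<^sub>1 + \<dots> + q\<^sub>m = 3m - 6\<close>. The same holds for the path starting with \<open>\<rho>\<^sub>2\<close>, and axiom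
  (R4) forces \<open>3 | m\<close>; these two linear conditions leave finitely many candidates
  \<open>(a, b, c, d, m)\<close>, which are checked by evaluation.\<close>

section \<open>Unimodular chains of planar vectors\<close>

type_synonym vec = "int \<times> int"

definition det2 :: "vec \<Rightarrow> vec \<Rightarrow> int" where
  "det2 u w = fst u * snd w - snd u * fst w"

definition pos_vec :: "vec \<Rightarrow> bool" where
  "pos_vec u \<longleftrightarrow> 0 \<le> fst u \<and> 0 \<le> snd u \<and> u \<noteq> 0"

definition sign_coherent :: "vec \<Rightarrow> bool" where
  "sign_coherent u \<longleftrightarrow> (0 \<le> fst u \<and> 0 \<le> snd u) \<or> (fst u \<le> 0 \<and> snd u \<le> 0)"

definition scale :: "int \<Rightarrow> vec \<Rightarrow> vec" where
  "scale l u = (l * fst u, l * snd u)"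

lemma scale_simps [simp]:
  "fst (scale l u) = l * fst u" "snd (scale l u) = l * snd u"
  by (simp_all add: scale_def)

lemma scale_diff_one: "scale (l - 1) u = scale l u - u"
  by (simp add: prod_eq_iff algebra_simps)

lemma det2_self [simp]: "det2 u u = 0"
  by (simp add: det2_def mult.commute)

lemma det2_swap: "det2 w u = - det2 u w"
  by (simp add: det2_def)

lemma det2_decomp:
  assumes "det2 u w = 1"
  shows "g = scale (det2 g w) u + scale (det2 u g) w"
proof -
  have "det2 g w * fst u + det2 u g * fst w = fst g * det2 u w"
       "det2 g w * snd u + det2 u g * snd w = snd g * det2 u w"
    by (simp_all add: det2_def algebra_simps)
  then show ?thesis using assms by (simp add: prod_eq_iff)
qed

lemma det2_pos_trans:
  assumes "pos_vec u" "pos_vec w" "pos_vec v" "det2 u w > 0" "det2 w v > 0"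
  shows "det2 u v > 0"
proof -
  obtain u1 u2 w1 w2 v1 v2 where uwv: "u = (u1,u2)" "w = (w1,w2)" "v = (v1,v2)"
    by (cases u; cases w; cases v)
  have nn: "u1 \<ge> 0" "u2 \<ge> 0" "w1 \<ge> 0" "w2 \<ge> 0" "v1 \<ge> 0" "v2 \<ge> 0"
    using assms(1-3) by (auto simp: pos_vec_def uwv)
  have d1: "u1*w2 > u2*w1" and d2: "w1*v2 > w2*v1"
    using assms(4,5) by (auto simp: det2_def uwv)
  have "w2 * v1 \<ge> 0" "u2 * w1 \<ge> 0" using nn by simp_all
  then have "w1 \<noteq> 0" "w2 \<noteq> 0" using d1 d2 by auto
  then have "w1 > 0" "w2 > 0" using nn by auto
  have "(u1*w2)*(w1*v2) > (u2*w1)*(w2*v1)"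
  proof -
    have "u1*w2 > 0" using d1 nn by (meson le_less_trans mult_nonneg_nonneg)
    with d2 have "(u1*w2)*(w1*v2) > (u1*w2)*(w2*v1)" by (rule mult_strict_left_mono)
    moreover have "(u1*w2)*(w2*v1) \<ge> (u2*w1)*(w2*v1)"
      using d1 nn by (simp add: mult_right_mono)
    ultimately show ?thesis by simp
  qed
  then have "(w1*w2)*(u1*v2) > (w1*w2)*(u2*v1)" by (simp add: algebra_simps)
  then have "u1*v2 > u2*v1" using \<open>w1 > 0\<close> \<open>w2 > 0\<close> by simp
  then show ?thesis by (simp add: det2_def uwv)
qed

lemma det2_chain_pos:
  assumes det: "\<forall>l\<in>{i..<n}. det2 (w l) (w (Suc l)) = 1"
    and pos: "\<forall>l\<in>{i..n}. pos_vec (w l)"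
    and "i \<le> j" "j < k" "k \<le> n"
  shows "det2 (w j) (w k) > 0"
  using \<open>j < k\<close> \<open>k \<le> n\<close>
proof (induction k)
  case (Suc k)
  show ?case
  proof (cases "j = k")
    case True
    then show ?thesis using det \<open>i \<le> j\<close> Suc.prems by auto
  next
    case False
    then have "det2 (w j) (w k) > 0" using Suc by auto
    moreover have "det2 (w k) (w (Suc k)) = 1" using det Suc.prems \<open>i \<le> j\<close> by auto
    ultimately show ?thesis
      using det2_pos_trans[of "w j" "w k" "w (Suc k)"] pos Suc.prems \<open>i \<le> j\<close> by auto
  qed
qed simp

lemma det2_chain_inj:
  assumes "\<forall>l\<in>{i..<n}. det2 (w l) (w (Suc l)) = 1" "\<forall>l\<in>{i..n}. pos_vec (w l)"
  shows "inj_on w {i..n}"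
proof (rule inj_onI, rule ccontr)
  fix j k assume jk: "j \<in> {i..n}" "k \<in> {i..n}" "w j = w k" "j \<noteq> k"
  then have "det2 (w (min j k)) (w (max j k)) > 0"
    using det2_chain_pos[OF assms, of "min j k" "max j k"] by auto
  then show False using jk by (simp add: min_def max_def split: if_splits)
qed

lemma pos_vec_in_fan:
  assumes "w 1 = (1,0)" "w m = (0,1)" "1 \<le> m"
    and det: "\<forall>j\<in>{1..<m}. det2 (w j) (w (Suc j)) = 1"
    and g: "pos_vec g"
  shows "(\<exists>j\<in>{1..m}. \<exists>l>0. g = scale l (w j))
       \<or> (\<exists>j\<in>{1..<m}. \<exists>l>0. \<exists>l'>0. g = scale l (w j) + scale l' (w (Suc j)))"
proof -
  define D where "D j = det2 (w j) g" for j
  have "D m \<le> 0" using g by (simp add: D_def det2_def assms pos_vec_def)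
  define k where "k = (LEAST k. 1 \<le> k \<and> D k \<le> 0)"
  have k: "1 \<le> k" "D k \<le> 0" and k_le: "k \<le> m"
    using LeastI[of "\<lambda>k. 1 \<le> k \<and> D k \<le> 0" m] Least_le[of "\<lambda>k. 1 \<le> k \<and> D k \<le> 0" m]
      \<open>D m \<le> 0\<close> \<open>1 \<le> m\<close> by (simp_all add: k_def)
  show ?thesis
  proof (cases "k = 1")
    case True
    then have "snd g = 0" using k g assms(1) by (simp add: D_def det2_def pos_vec_def)
    then have "g = scale (fst g) (w 1)" "fst g > 0"
      using g assms(1) by (auto simp: pos_vec_def prod_eq_iff)
    then show ?thesis using \<open>1 \<le> m\<close> by auto
  next
    case False
    then have "\<not> (1 \<le> k - 1 \<and> D (k - 1) \<le> 0)"
      using not_less_Least[of "k - 1" "\<lambda>k. 1 \<le> k \<and> D k \<le> 0"] k unfolding k_def by linarith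
    then have "D (k - 1) > 0" using k False by auto
    have km: "k - 1 \<in> {1..<m}" "Suc (k - 1) = k" using k k_le False by auto
    then have "det2 (w (k - 1)) (w k) = 1" using det by metis
    from det2_decomp[OF this, of g]
    have g_eq: "g = scale (- D k) (w (k - 1)) + scale (D (k - 1)) (w k)"
      by (simp add: D_def det2_swap[of g])
    show ?thesis
    proof (cases "D k = 0")
      case True
      then have "g = scale (D (k - 1)) (w k)" using g_eq by (simp add: scale_def)
      then show ?thesis using \<open>D (k - 1) > 0\<close> k k_le by auto
    next
      case False
      then have "0 < - D k" using \<open>D k \<le> 0\<close> by simp
      moreover have "g = scale (- D k) (w (k - 1)) + scale (D (k - 1)) (w (Suc (k - 1)))"
        using g_eq km by simp
      ultimately show ?thesis using \<open>D (k - 1) > 0\<close> km(1) by blast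
    qed
  qed
qed

definition refl_step :: "nat \<Rightarrow> int \<Rightarrow> vec \<Rightarrow> vec" where
  "refl_step k q u = (if odd k then (q * snd u - fst u, snd u) else (fst u, q * fst u - snd u))"

lemma refl_step_involution [simp]: "refl_step k q (refl_step k q u) = u"
  by (simp add: refl_step_def)

lemma refl_step_linear [simp]:
  "refl_step k q (u + w) = refl_step k q u + refl_step k q w"
  "refl_step k q (u - w) = refl_step k q u - refl_step k q w"
  "refl_step k q (- u) = - refl_step k q u"
  "refl_step k q (scale l u) = scale l (refl_step k q u)"
  by (simp_all add: refl_step_def prod_eq_iff algebra_simps)

primrec refl_steps :: "(nat \<Rightarrow> int) \<Rightarrow> nat \<Rightarrow> vec \<Rightarrow> vec" where
  "refl_steps q 0 = id"
| "refl_steps q (Suc k) = refl_step (Suc k) (q (Suc k)) \<circ> refl_steps q k"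

lemma inj_refl_steps: "inj (refl_steps q k)"
proof (induction k)
  case (Suc k)
  have "inj (refl_step (Suc k) (q (Suc k)))" by (metis injI refl_step_involution)
  then show ?case unfolding refl_steps.simps using Suc.IH by (rule inj_compose)
qed simp

lemma refl_steps_linear [simp]:
  "refl_steps q k (u + w) = refl_steps q k u + refl_steps q k w"
  "refl_steps q k (u - w) = refl_steps q k u - refl_steps q k w"
  "refl_steps q k (- u) = - refl_steps q k u"
  "refl_steps q k (scale l u) = scale l (refl_steps q k u)"
  by (induction k) simp_all

text \<open>The sequence is computed by pairs of consecutive terms, so that evaluating it takes linear time.\<close>

primrec root_pair :: "(nat \<Rightarrow> int) \<Rightarrow> nat \<Rightarrow> vec \<times> vec" where
  "root_pair q 0 = ((0, -1), (1, 0))"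
| "root_pair q (Suc k) = (snd (root_pair q k), scale (q (Suc k)) (snd (root_pair q k)) - fst (root_pair q k))"

definition root_seq :: "(nat \<Rightarrow> int) \<Rightarrow> nat \<Rightarrow> vec" where
  "root_seq q k = fst (root_pair q k)"

lemma root_seq_0 [simp]: "root_seq q 0 = (0, -1)"
  and root_seq_1 [simp]: "root_seq q (Suc 0) = (1, 0)"
  and root_seq_Suc_Suc: "root_seq q (Suc (Suc k)) = scale (q (Suc k)) (root_seq q (Suc k)) - root_seq q k"
  by (simp_all add: root_seq_def)

lemma det2_root_seq: "det2 (root_seq q k) (root_seq q (Suc k)) = 1"
  by (induction k) (simp_all add: root_seq_Suc_Suc det2_def algebra_simps)

definition unit_vec :: "nat \<Rightarrow> vec" where
  "unit_vec k = (if odd k then (1, 0) else (0, 1))"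

lemma refl_steps_root_seq:
  "refl_steps q k (root_seq q k) = - unit_vec k \<and> refl_steps q k (root_seq q (Suc k)) = unit_vec (Suc k)"
proof (induction k)
  case (Suc k)
  then show ?case
    by (simp add: root_seq_Suc_Suc) (simp add: refl_step_def unit_vec_def prod_eq_iff)
qed (simp add: unit_vec_def)

section \<open>Root walks\<close>

definition reaches_top :: "(nat \<Rightarrow> int) \<Rightarrow> nat \<Rightarrow> bool" where
  "reaches_top q m \<longleftrightarrow> (\<forall>j\<in>{1..m}. pos_vec (root_seq q j)) \<and> root_seq q m = (0, 1)"

text \<open>\<open>V k\<close> models the roots of the \<open>k\<close>-th object along a path alternating between two
  reflections, in the coordinates of the two simple roots; \<open>q k\<close> is the Cartan entry of step \<open>k\<close>.\<close>

locale root_walk =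
  fixes V :: "nat \<Rightarrow> vec set" and q :: "nat \<Rightarrow> int"
  assumes V_Suc: "V (Suc k) = refl_step (Suc k) (q (Suc k)) ` V k"
    and sign_coherent: "u \<in> V k \<Longrightarrow> sign_coherent u"
    and axis1: "(n, 0) \<in> V k \<longleftrightarrow> n = 1 \<or> n = -1"
    and axis2: "(0, n) \<in> V k \<longleftrightarrow> n = 1 \<or> n = -1"
    and uminus_mem: "u \<in> V k \<Longrightarrow> - u \<in> V k"
begin

lemma V_eq: "V k = refl_steps q k ` V 0"
  by (induction k) (simp_all add: V_Suc image_comp)

lemma refl_steps_mem_iff: "refl_steps q k u \<in> V k \<longleftrightarrow> u \<in> V 0"
  unfolding V_eq[of k] by (rule inj_image_mem_iff[OF inj_refl_steps])

lemma zero_notin: "0 \<notin> V k"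
  using axis1[of 0 k] by (simp add: zero_prod_def)

lemma root_seq_mem: "root_seq q k \<in> V 0"
proof -
  have "refl_steps q k (root_seq q k) \<in> V k"
    using refl_steps_root_seq[of q k] by (simp add: unit_vec_def axis1 axis2)
  then show ?thesis by (simp only: refl_steps_mem_iff)
qed

lemma no_root_in_open_cone:
  assumes "scale l (root_seq q k) + scale l' (root_seq q (Suc k)) \<in> V 0"
  shows "l \<le> 0 \<or> l' \<le> 0"
proof -
  have "refl_steps q k (scale l (root_seq q k) + scale l' (root_seq q (Suc k))) \<in> V k"
    using assms by (simp only: refl_steps_mem_iff)
  then have "sign_coherent (scale l (- unit_vec k) + scale l' (unit_vec (Suc k)))"
    using refl_steps_root_seq[of q k] sign_coherent by simp
  then show ?thesis by (cases "odd k") (auto simp: sign_coherent_def unit_vec_def)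
qed

lemma root_multiple_eq_one:
  assumes "0 < l" "scale l (root_seq q k) \<in> V 0"
  shows "l = 1"
proof -
  have "refl_steps q k (scale l (root_seq q k)) \<in> V k"
    using assms(2) by (simp only: refl_steps_mem_iff)
  then have "scale l (- unit_vec k) \<in> V k" using refl_steps_root_seq[of q k] by simp
  then have "l = 1 \<or> l = -1" by (cases "odd k") (auto simp: unit_vec_def scale_def axis1 axis2)
  then show ?thesis using assms(1) by auto
qed

text \<open>When the root sequence leaves the positive quadrant, it does so by passing from \<open>\<alpha>\<^sub>2\<close>
  to \<open>-\<alpha>\<^sub>1\<close>: otherwise \<open>\<alpha>\<^sub>2\<close> or \<open>-\<alpha>\<^sub>1\<close> would lie strictly inside the cone of two consecutive terms.\<close>

lemma leaves_quadrant:
  assumes pos: "pos_vec (root_seq q m)" and not_pos: "\<not> pos_vec (root_seq q (Suc m))"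
  shows "root_seq q m = (0, 1) \<and> root_seq q (Suc m) = (-1, 0)"
proof -
  obtain u w where vm: "root_seq q m = (u, w)" by (rule prod.exhaust)
  obtain s t where vm1: "root_seq q (Suc m) = (s, t)" by (rule prod.exhaust)
  have uw: "0 \<le> u" "0 \<le> w" using pos by (simp_all add: pos_vec_def vm)
  have root: "(s, t) \<in> V 0" using root_seq_mem vm1 by metis
  then have "(s, t) \<noteq> 0" using zero_notin[of 0] by auto
  moreover have "sign_coherent (s, t)" using root by (rule sign_coherent)
  ultimately have st: "s \<le> 0" "t \<le> 0"
    using not_pos by (auto simp: sign_coherent_def pos_vec_def vm1)
  have det: "u * t - w * s = 1" using det2_root_seq[of q m] by (simp add: det2_def vm vm1)
  have "scale (- t) (root_seq q m) + scale w (root_seq q (Suc m)) = (-1, 0)"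
       "scale (- s) (root_seq q m) + scale u (root_seq q (Suc m)) = (0, 1)"
    using det by (simp_all add: vm vm1 scale_def algebra_simps)
  moreover have "(-1, 0) \<in> V 0" "(0, 1) \<in> V 0" by (simp_all add: axis1 axis2)
  ultimately have "- t \<le> 0 \<or> w \<le> 0" "- s \<le> 0 \<or> u \<le> 0"
    using no_root_in_open_cone by metis+
  moreover have "0 \<le> - (u * t)" using uw st by (simp add: mult_nonneg_nonpos)
  then have "0 < w * (- s)" using det by simp
  then have "w \<noteq> 0" "s \<noteq> 0" by auto
  then have "0 < w" "0 < - s" using uw st by simp_all
  ultimately have "t = 0" "u = 0" using uw st by auto
  then have "w * (- s) = 1" using det by simp
  then have "w = 1" "s = -1" using \<open>0 < w\<close> zmult_eq_1_iff[of w "- s"] by auto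
  then show ?thesis using vm vm1 \<open>t = 0\<close> \<open>u = 0\<close> by simp
qed

lemma finite_root_seq_not_pos:
  assumes "finite (V 0)"
  shows "\<exists>j\<ge>1. \<not> pos_vec (root_seq q j)"
proof (rule ccontr)
  assume "\<not> ?thesis"
  then have pos: "\<forall>j\<in>{1..Suc (card (V 0))}. pos_vec (root_seq q j)" by auto
  have "inj_on (root_seq q) {1..Suc (card (V 0))}"
    using det2_root_seq pos by (intro det2_chain_inj) auto
  then have "card (root_seq q ` {1..Suc (card (V 0))}) = Suc (card (V 0))"
    by (simp add: card_image)
  moreover have "root_seq q ` {1..Suc (card (V 0))} \<subseteq> V 0" using root_seq_mem by auto
  ultimately show False using card_mono[OF assms] by (metis Suc_n_not_le_n)
qed

lemma finite_reaches_top: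
  assumes "finite (V 0)"
  shows "\<exists>m\<ge>2. reaches_top q m \<and> root_seq q (Suc m) = (-1, 0)"
proof -
  note ex = finite_root_seq_not_pos[OF assms]
  define j0 where "j0 = (LEAST j. 1 \<le> j \<and> \<not> pos_vec (root_seq q j))"
  have j0: "1 \<le> j0" "\<not> pos_vec (root_seq q j0)"
    using LeastI_ex[OF ex] by (simp_all add: j0_def)
  have below: "pos_vec (root_seq q j)" if "1 \<le> j" "j < j0" for j
    using not_less_Least[of j "\<lambda>j. 1 \<le> j \<and> \<not> pos_vec (root_seq q j)"] that
    unfolding j0_def by simp
  have "j0 \<noteq> 1" using j0 by (auto simp: pos_vec_def zero_prod_def)
  then obtain m where m: "j0 = Suc m" "1 \<le> m" using j0 by (cases j0) auto
  have pos: "\<forall>j\<in>{1..m}. pos_vec (root_seq q j)" using below m by auto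
  have "pos_vec (root_seq q m)" using pos m by auto
  then have "root_seq q m = (0, 1) \<and> root_seq q (Suc m) = (-1, 0)"
    using leaves_quadrant j0 m by simp
  moreover from this have "m \<noteq> 1" by auto
  ultimately have "2 \<le> m \<and> reaches_top q m \<and> root_seq q (Suc m) = (-1, 0)"
    using pos m by (auto simp: reaches_top_def)
  then show ?thesis by blast
qed

lemma positive_roots_eq:
  assumes "1 \<le> m" "reaches_top q m"
  shows "{u \<in> V 0. pos_vec u} = root_seq q ` {1..m}"
proof
  show "root_seq q ` {1..m} \<subseteq> {u \<in> V 0. pos_vec u}"
    using assms root_seq_mem by (auto simp: reaches_top_def)
next
  show "{u \<in> V 0. pos_vec u} \<subseteq> root_seq q ` {1..m}"
  proof clarify
    fix g assume g: "g \<in> V 0" "pos_vec g"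
    then consider j l where "j \<in> {1..m}" "0 < l" "g = scale l (root_seq q j)"
      | j l l' where "j \<in> {1..<m}" "0 < l" "0 < l'"
          "g = scale l (root_seq q j) + scale l' (root_seq q (Suc j))"
      using pos_vec_in_fan[of "root_seq q" m g] det2_root_seq assms by (auto simp: reaches_top_def)
    then show "g \<in> root_seq q ` {1..m}"
    proof cases
      case 1
      then have "l = 1" using root_multiple_eq_one g by blast
      then show ?thesis using 1 by (simp add: scale_def)
    next
      case 2
      then show ?thesis using no_root_in_open_cone g by fastforce
    qed
  qed
qed

lemma card_positive_roots:
  assumes "1 \<le> m" "reaches_top q m"
  shows "card {u \<in> V 0. pos_vec u} = m"
proof -
  have "inj_on (root_seq q) {1..m}"
    using det2_chain_inj det2_root_seq assms by (auto simp: reaches_top_def)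
  then show ?thesis by (simp add: positive_roots_eq[OF assms] card_image)
qed

lemma finite_if_reaches_top:
  assumes "1 \<le> m" "reaches_top q m"
  shows "finite (V 0)"
proof -
  have "V 0 \<subseteq> {u \<in> V 0. pos_vec u} \<union> uminus ` {u \<in> V 0. pos_vec u}"
  proof
    fix u assume u: "u \<in> V 0"
    then have "pos_vec u \<or> pos_vec (- u)"
      using sign_coherent zero_notin by (fastforce simp: sign_coherent_def pos_vec_def)
    moreover have "u = - (- u)" "- u \<in> V 0" using u uminus_mem by simp_all
    ultimately show "u \<in> {u \<in> V 0. pos_vec u} \<union> uminus ` {u \<in> V 0. pos_vec u}"
      using u by blast
  qed
  then show ?thesis using positive_roots_eq[OF assms] finite_subset by fastforce
qed

end

section \<open>Quiddity chains\<close>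

definition height :: "vec \<Rightarrow> int" where
  "height u = fst u + snd u"

lemma height_add: "height (u + w) = height u + height w"
  and height_scale: "height (scale l u) = l * height u"
  by (simp_all add: height_def algebra_simps)

lemma height_pos: "pos_vec u \<Longrightarrow> 1 \<le> height u"
  by (auto simp: pos_vec_def height_def zero_prod_def prod_eq_iff)

lemma height_eq_one: "pos_vec u \<Longrightarrow> height u = 1 \<Longrightarrow> u = (1, 0) \<or> u = (0, 1)"
  by (cases u) (auto simp: pos_vec_def height_def)

lemma det2_eq_one_height_eq:
  assumes "pos_vec u'" "height u = height u'" "det2 u u' = 1"
  shows "height u = 1"
proof -
  obtain a b c d where uu': "u = (a, b)" "u' = (c, d)" by fastforce
  have "b = c + d - a" using assms(2) by (simp add: height_def uu')
  then have "a * d - (c + d - a) * c = 1" using assms(3) by (simp add: det2_def uu')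
  then have "(c + d) * (a - c) = 1" by (simp add: algebra_simps)
  moreover have "c + d \<ge> 0" using assms(1) by (simp add: pos_vec_def uu')
  ultimately show ?thesis using assms(2) by (simp add: height_def uu' zmult_eq_1_iff)
qed

text \<open>Conway--Coxeter quiddity sequences, with the chain closed by \<open>w 0 = -(0,1)\<close> and
  \<open>w (n + 1) = -(1,0)\<close> so that the quiddity relation also holds at both ends.\<close>

definition quiddity_chain :: "(nat \<Rightarrow> vec) \<Rightarrow> (nat \<Rightarrow> int) \<Rightarrow> nat \<Rightarrow> bool" where
  "quiddity_chain w p n \<longleftrightarrow> 2 \<le> n \<and> w 0 = (0, -1) \<and> w 1 = (1, 0) \<and> w n = (0, 1) \<and> w (Suc n) = (-1, 0)
     \<and> (\<forall>j\<in>{1..n}. pos_vec (w j)) \<and> (\<forall>j\<le>n. det2 (w j) (w (Suc j)) = 1)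
     \<and> (\<forall>j\<in>{1..n}. w (j - 1) + w (Suc j) = scale (p j) (w j))"

lemma quiddity_chain_peak:
  assumes chain: "quiddity_chain w p n" and k: "k \<in> {2..n-1}"
    and lower: "height (w (k - 1)) < height (w k)" "height (w (Suc k)) < height (w k)"
  shows "p k = 1"
proof -
  have kb: "k - 1 \<in> {1..n}" "k \<in> {1..n}" "Suc k \<in> {1..n}" using k by auto
  have pos: "\<forall>j\<in>{1..n}. pos_vec (w j)" using chain by (simp add: quiddity_chain_def)
  have "w (k - 1) + w (Suc k) = scale (p k) (w k)"
    using chain kb by (simp add: quiddity_chain_def)
  then have "height (w (k - 1)) + height (w (Suc k)) = p k * height (w k)"
    by (metis height_add height_scale)
  moreover have "1 \<le> height (w (k - 1))" "1 \<le> height (w (Suc k))" "0 < height (w k)"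
    using height_pos pos kb by fastforce+
  ultimately have "0 < p k * height (w k)" "p k * height (w k) < 2 * height (w k)"
    using lower by linarith+
  then have "0 < p k" "p k < 2" using \<open>0 < height (w k)\<close> by (simp_all add: zero_less_mult_iff)
  then show ?thesis by simp
qed

text \<open>An interior vertex of maximal height is an ear: its neighbours are strictly lower.\<close>

lemma quiddity_chain_interior_one:
  assumes chain: "quiddity_chain w p n" and "3 \<le> n"
  shows "\<exists>k\<in>{2..n-1}. p k = 1"
proof -
  have pos: "\<forall>j\<in>{1..n}. pos_vec (w j)" and det: "\<forall>j\<le>n. det2 (w j) (w (Suc j)) = 1"
    and ends: "w 1 = (1, 0)" "w n = (0, 1)"
    using chain by (simp_all add: quiddity_chain_def)
  have "{2..n-1} \<noteq> {}" using \<open>3 \<le> n\<close> by simp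
  then obtain k where k: "k \<in> {2..n-1}" and "Max ((\<lambda>j. height (w j)) ` {2..n-1}) = height (w k)"
    by (rule obtains_MAX[OF finite_atLeastAtMost])
  then have kmax: "height (w j) \<le> height (w k)" if "j \<in> {2..n-1}" for j
    using that by (metis Max_ge finite_atLeastAtMost finite_imageI image_eqI)
  have kb: "k \<in> {1..n}" "k - 1 \<in> {1..n}" "Suc k \<in> {1..n}" "Suc (k - 1) = k" using k by auto
  have "inj_on w {1..n}" using det2_chain_inj[of 1 n w] pos det by auto
  then have "w k \<noteq> w 1" "w k \<noteq> w n" using k \<open>3 \<le> n\<close> by (auto dest: inj_onD)
  then have "height (w k) \<noteq> 1" using height_eq_one[of "w k"] pos kb ends by auto
  have le: "height (w j) \<le> height (w k)" if "j \<in> {1..n}" for j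
  proof (cases "j \<in> {2..n-1}")
    case False
    then have "j = 1 \<or> j = n" using that by auto
    then have "w j = (1, 0) \<or> w j = (0, 1)" using ends by auto
    then show ?thesis using height_pos[of "w k"] pos kb by (auto simp: height_def)
  qed (rule kmax)
  have "det2 (w (k - 1)) (w k) = 1" "det2 (w k) (w (Suc k)) = 1"
    using det[rule_format, of "k - 1"] det[rule_format, of k] kb by simp_all
  moreover have "pos_vec (w k)" "pos_vec (w (Suc k))" using pos kb by simp_all
  ultimately have "height (w (k - 1)) \<noteq> height (w k)" "height (w k) \<noteq> height (w (Suc k))"
    using det2_eq_one_height_eq \<open>height (w k) \<noteq> 1\<close> by metis+
  then have "height (w (k - 1)) < height (w k)" "height (w (Suc k)) < height (w k)"
    using le[of "k - 1"] le[of "Suc k"] kb by simp_all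
  then show ?thesis using quiddity_chain_peak[OF chain k] k by blast
qed

definition skip :: "nat \<Rightarrow> nat \<Rightarrow> nat" where
  "skip k j = (if j < k then j else Suc j)"

lemma sum_skip:
  fixes p :: "nat \<Rightarrow> 'a::ab_group_add"
  assumes "k \<in> {1..n}"
  shows "(\<Sum>j=1..n-1. p (skip k j)) = (\<Sum>j=1..n. p j) - p k"
proof -
  have "inj_on (skip k) {1..n-1}" by (rule inj_onI) (simp add: skip_def split: if_splits)
  moreover have "skip k ` {1..n-1} = {1..n} - {k}"
  proof
    show "{1..n} - {k} \<subseteq> skip k ` {1..n-1}"
    proof
      fix j assume j: "j \<in> {1..n} - {k}"
      show "j \<in> skip k ` {1..n-1}"
      proof (cases "j < k")
        case False
        then have "j = skip k (j - 1)" "j - 1 \<in> {1..n-1}" using j assms by (auto simp: skip_def)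
        then show ?thesis by blast
      next
        case True
        then have "j = skip k j" "j \<in> {1..n-1}" using j assms by (auto simp: skip_def)
        then show ?thesis by blast
      qed
    qed
  qed (use assms in \<open>auto simp: skip_def\<close>)
  ultimately have "(\<Sum>j=1..n-1. p (skip k j)) = sum p ({1..n} - {k})"
    using sum.reindex[of "skip k" "{1..n-1}" p] by simp
  then show ?thesis using assms by (simp add: sum_diff1)
qed

text \<open>Cutting off the ear at \<open>k\<close> lowers the quiddities of both neighbours by one.\<close>

definition cut_quiddity :: "(nat \<Rightarrow> int) \<Rightarrow> nat \<Rightarrow> nat \<Rightarrow> int" where
  "cut_quiddity p k j = p (skip k j) - (if j = k - 1 \<or> j = k then 1 else 0)"

lemma sum_cut_quiddity:
  assumes "k \<in> {2..n-1}"
  shows "(\<Sum>j=1..n-1. cut_quiddity p k j) = (\<Sum>j=1..n. p j) - p k - 2"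
proof -
  have "{1..n-1} \<inter> {j. j = k - 1 \<or> j = k} = {k - 1, k}" "k - 1 \<noteq> k" using assms by auto
  then have "(\<Sum>j=1..n-1. if j = k - 1 \<or> j = k then 1 else 0 :: int) = 2"
    by (simp add: sum.If_cases)
  moreover have "k \<in> {1..n}" using assms by auto
  ultimately show ?thesis using sum_skip[of k n p] by (simp add: cut_quiddity_def sum_subtractf)
qed

lemma quiddity_chain_ear:
  assumes chain: "quiddity_chain w p n" and "k \<in> {2..n-1}" "p k = 1"
  shows "w (Suc k) = w k - w (k - 1)"
proof -
  have "k \<in> {1..n}" using assms(2) by auto
  then have "w (k - 1) + w (Suc k) = w k"
    using chain \<open>p k = 1\<close> by (simp add: quiddity_chain_def scale_def)
  then show ?thesis by (metis add_diff_cancel_left')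
qed

lemma quiddity_chain_cut_det:
  assumes chain: "quiddity_chain w p n" and k: "k \<in> {2..n-1}" "p k = 1" and "j \<le> n - 1"
  shows "det2 (w (skip k j)) (w (skip k (Suc j))) = 1"
proof -
  have det: "det2 (w l) (w (Suc l)) = 1" if "l \<le> n" for l
    using chain that by (simp add: quiddity_chain_def)
  have "det2 (w (k - 1)) (w (Suc k)) = det2 (w (k - 1)) (w k)"
    by (simp add: quiddity_chain_ear[OF assms(1-3)] det2_def algebra_simps)
  also have "\<dots> = 1" using det[of "k - 1"] k by auto
  finally have ear: "det2 (w (k - 1)) (w (Suc k)) = 1" .
  consider "Suc j < k" | "Suc j = k" | "k \<le> j" by linarith
  then show ?thesis
  proof cases
    case 1
    then show ?thesis using det[of j] \<open>j \<le> n - 1\<close> by (simp add: skip_def)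
  next
    case 2
    then have "j = k - 1" by simp
    then show ?thesis using ear 2 by (simp add: skip_def)
  next
    case 3
    moreover have "Suc j \<le> n" using \<open>j \<le> n - 1\<close> k by auto
    ultimately show ?thesis using det[of "Suc j"] by (simp add: skip_def)
  qed
qed

lemma quiddity_chain_cut_rel:
  assumes chain: "quiddity_chain w p n" and k: "k \<in> {2..n-1}" "p k = 1" and j: "j \<in> {1..n-1}"
  shows "w (skip k (j - 1)) + w (skip k (Suc j)) = scale (cut_quiddity p k j) (w (skip k j))"
proof -
  have rel: "w (l - 1) + w (Suc l) = scale (p l) (w l)" if "l \<in> {1..n}" for l
    using chain that by (simp add: quiddity_chain_def)
  note ear = quiddity_chain_ear[OF chain k]
  have kb: "k - 1 \<in> {1..n}" "Suc k \<in> {1..n}" "Suc (k - 1) = k" "k - 1 - 1 = k - 2" using k by auto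
  consider "Suc j < k" | "Suc j = k" | "j = k" | "k < j" by linarith
  then show ?thesis
  proof cases
    case 1
    then show ?thesis using j rel[of j] by (auto simp: skip_def cut_quiddity_def)
  next
    case 2
    have "w (k - 2) + w (Suc k) = (w (k - 2) + w k) - w (k - 1)"
      by (simp add: ear algebra_simps)
    also have "\<dots> = scale (p (k - 1) - 1) (w (k - 1))"
      using rel[of "k - 1"] kb by (simp add: scale_diff_one)
    finally show ?thesis using 2 kb by (auto simp: skip_def cut_quiddity_def)
  next
    case 3
    have "w (k - 1) + w (Suc (Suc k)) = (w k + w (Suc (Suc k))) - w (Suc k)"
      by (simp add: ear algebra_simps)
    also have "\<dots> = scale (p (Suc k) - 1) (w (Suc k))"
      using rel[of "Suc k"] kb by (simp add: scale_diff_one)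
    finally show ?thesis using 3 kb by (simp add: skip_def cut_quiddity_def)
  next
    case 4
    then show ?thesis using j rel[of "Suc j"] by (auto simp: skip_def cut_quiddity_def)
  qed
qed

lemma quiddity_chain_cut:
  assumes chain: "quiddity_chain w p n" and k: "k \<in> {2..n-1}" "p k = 1"
  shows "quiddity_chain (\<lambda>j. w (skip k j)) (cut_quiddity p k) (n - 1)"
proof -
  have ends: "w 0 = (0, -1)" "w 1 = (1, 0)" "w n = (0, 1)" "w (Suc n) = (-1, 0)"
    and pos: "\<forall>j\<in>{1..n}. pos_vec (w j)"
    using chain by (simp_all add: quiddity_chain_def)
  have "\<forall>j\<in>{1..n-1}. pos_vec (w (skip k j))" using pos by (auto simp: skip_def)
  moreover have "skip k 0 = 0" "skip k 1 = 1" "skip k (n - 1) = n" "skip k n = Suc n" "2 \<le> n - 1"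
    using k by (auto simp: skip_def)
  ultimately show ?thesis
    using ends quiddity_chain_cut_det[OF chain k] quiddity_chain_cut_rel[OF chain k]
    by (simp add: quiddity_chain_def)
qed

theorem quiddity_chain_sum:
  assumes "quiddity_chain w p n"
  shows "(\<Sum>j=1..n. p j) = 3 * int n - 6"
  using assms
proof (induction n arbitrary: w p rule: less_induct)
  case (less n)
  show ?case
  proof (cases "n = 2")
    case True
    with less.prems have rel: "\<forall>j\<in>{1..2}. w (j - 1) + w (Suc j) = scale (p j) (w j)"
      and "w 0 = (0, -1)" "w 1 = (1, 0)" "w 2 = (0, 1)" "w 3 = (-1, 0)"
      by (simp_all add: quiddity_chain_def numeral_3_eq_3)
    moreover have "w 0 + w 2 = scale (p 1) (w 1)" "w 1 + w 3 = scale (p 2) (w 2)"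
      using bspec[OF rel, of 1] bspec[OF rel, of 2] by (simp_all add: numeral_2_eq_2 numeral_3_eq_3)
    ultimately have "p 1 = 0" "p 2 = 0" by (simp_all add: scale_def)
    with True show ?thesis by (simp add: numeral_2_eq_2)
  next
    case False
    then have "3 \<le> n" using less.prems by (simp add: quiddity_chain_def)
    then obtain k where k: "k \<in> {2..n-1}" "p k = 1"
      using quiddity_chain_interior_one less.prems by blast
    have "(\<Sum>j=1..n-1. cut_quiddity p k j) = 3 * int (n - 1) - 6"
      using less.IH[of "n - 1"] quiddity_chain_cut[OF less.prems k] \<open>3 \<le> n\<close> by simp
    then show ?thesis using sum_cut_quiddity[OF k(1)] k(2) \<open>3 \<le> n\<close> by simp
  qed
qed

lemma quiddity_chain_root_seq:
  assumes "2 \<le> m" "reaches_top q m" "root_seq q (Suc m) = (-1, 0)"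
  shows "quiddity_chain (root_seq q) q m"
proof -
  have "root_seq q (j - 1) + root_seq q (Suc j) = scale (q j) (root_seq q j)" if "1 \<le> j" for j
    using that by (cases j) (simp_all add: root_seq_Suc_Suc)
  then show ?thesis using assms det2_root_seq by (auto simp: quiddity_chain_def reaches_top_def)
qed

section \<open>Root systems of rank two\<close>

definition proj :: "'i \<Rightarrow> 'i \<Rightarrow> ('i \<Rightarrow> int) \<Rightarrow> vec" where
  "proj i j v = (v i, v j)"

definition alt :: "'i \<Rightarrow> 'i \<Rightarrow> nat \<Rightarrow> 'i" where
  "alt i j k = (if odd k then i else j)"

primrec scheme_path :: "('i \<Rightarrow> 'a \<Rightarrow> 'a) \<Rightarrow> 'i \<Rightarrow> 'i \<Rightarrow> 'a \<Rightarrow> nat \<Rightarrow> 'a" where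
  "scheme_path rho i j a 0 = a"
| "scheme_path rho i j a (Suc k) = rho (alt i j (Suc k)) (scheme_path rho i j a k)"

definition path_cartan ::
  "('i \<Rightarrow> 'a \<Rightarrow> 'a) \<Rightarrow> ('a \<Rightarrow> 'i \<Rightarrow> 'i \<Rightarrow> int) \<Rightarrow> 'i \<Rightarrow> 'i \<Rightarrow> 'a \<Rightarrow> nat \<Rightarrow> int" where
  "path_cartan rho C i j a k = - C (scheme_path rho i j a (k - 1)) (alt i j k) (alt i j (Suc k))"

locale rank2_root_system =
  fixes i j :: 'i and A :: "'a set" and rho C R
  assumes root_system: "root_system {i, j} A rho C R" and ij: "i \<noteq> j"
begin

lemma is_cartan_scheme: "cartan_scheme {i, j} A rho C"
  using root_system unfolding root_system_def by blast

lemma rho_mem: "a \<in> A \<Longrightarrow> l \<in> {i, j} \<Longrightarrow> rho l a \<in> A"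
  using is_cartan_scheme unfolding cartan_scheme_def by blast

lemma cartan_diag: "a \<in> A \<Longrightarrow> l \<in> {i, j} \<Longrightarrow> C a l l = 2"
  using is_cartan_scheme unfolding cartan_scheme_def gcm_def by blast

lemma root_eq_comb:
  assumes "a \<in> A" "v \<in> R a"
  shows "v = (\<lambda>k. v i * alpha i k + v j * alpha j k)"
proof -
  have "v \<in> zvec {i, j}" using assms root_system by (auto simp: root_system_def)
  then have "v k = v i * alpha i k + v j * alpha j k" for k
    using ij by (cases "k = i"; cases "k = j") (simp_all add: zvec_def alpha_def)
  then show ?thesis by blast
qed

lemma inj_on_proj: "a \<in> A \<Longrightarrow> inj_on (proj i j) (R a)"
proof (rule inj_onI)
  fix u v assume "a \<in> A" "u \<in> R a" "v \<in> R a" "proj i j u = proj i j v"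
  then have "u = (\<lambda>k. u i * alpha i k + u j * alpha j k)" "u i = v i" "u j = v j"
    using root_eq_comb[of a u] by (simp_all add: proj_def)
  then show "u = v" using root_eq_comb[OF \<open>a \<in> A\<close> \<open>v \<in> R a\<close>] by metis
qed

lemma multiple_alpha_mem_iff:
  assumes "a \<in> A" "l \<in> {i, j}"
  shows "(\<lambda>k. n * alpha l k) \<in> R a \<longleftrightarrow> n = 1 \<or> n = -1"
proof -
  have "R a \<inter> {(\<lambda>k. n * alpha l k) | n. True} = {alpha l, (\<lambda>k. - alpha l k)}"
    using assms root_system unfolding root_system_def by blast
  then have "(\<lambda>k. n * alpha l k) \<in> R a \<longleftrightarrow> (\<lambda>k. n * alpha l k) \<in> {alpha l, (\<lambda>k. - alpha l k)}"
    by blast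
  also have "\<dots> \<longleftrightarrow> n = 1 \<or> n = -1"
  proof
    assume "(\<lambda>k. n * alpha l k) \<in> {alpha l, (\<lambda>k. - alpha l k)}"
    then have "n * alpha l l = alpha l l \<or> n * alpha l l = - alpha l l"
      by (auto dest: fun_cong[of _ _ l])
    then show "n = 1 \<or> n = -1" by (simp add: alpha_def)
  qed auto
  finally show ?thesis .
qed

lemma proj_mem_iff:
  assumes "a \<in> A"
  shows "(s, t) \<in> proj i j ` R a \<longleftrightarrow> (\<lambda>k. s * alpha i k + t * alpha j k) \<in> R a"
proof
  assume "(s, t) \<in> proj i j ` R a"
  then obtain v where v: "v \<in> R a" "v i = s" "v j = t" by (auto simp: proj_def)
  from root_eq_comb[OF assms v(1)] have "v = (\<lambda>k. s * alpha i k + t * alpha j k)"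
    unfolding v(2,3) .
  then show "(\<lambda>k. s * alpha i k + t * alpha j k) \<in> R a" using v(1) by simp
next
  assume mem: "(\<lambda>k. s * alpha i k + t * alpha j k) \<in> R a"
  have "(s, t) = proj i j (\<lambda>k. s * alpha i k + t * alpha j k)"
    using ij by (simp add: proj_def alpha_def)
  then show "(s, t) \<in> proj i j ` R a" using mem by (rule image_eqI)
qed

lemma proj_axis:
  assumes "a \<in> A"
  shows "(n, 0) \<in> proj i j ` R a \<longleftrightarrow> n = 1 \<or> n = -1"
    and "(0, n) \<in> proj i j ` R a \<longleftrightarrow> n = 1 \<or> n = -1"
  using multiple_alpha_mem_iff[OF assms, of i n] multiple_alpha_mem_iff[OF assms, of j n]
  by (simp_all add: proj_mem_iff[OF assms])

lemma root_nonneg_or_nonpos: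
  assumes "a \<in> A" "v \<in> R a"
  shows "v \<in> nvec {i, j} \<or> (\<lambda>k. - v k) \<in> nvec {i, j}"
proof -
  have "R a = pos_roots {i, j} (R a) \<union> (\<lambda>v k. - v k) ` pos_roots {i, j} (R a)"
    using assms root_system by (simp add: root_system_def)
  then show ?thesis using assms(2) by (auto simp: pos_roots_def)
qed

lemma uminus_root:
  assumes "a \<in> A" "v \<in> R a"
  shows "(\<lambda>k. - v k) \<in> R a"
proof -
  let ?P = "pos_roots {i, j} (R a)"
  have R: "R a = ?P \<union> (\<lambda>v k. - v k) ` ?P"
    using assms(1) root_system unfolding root_system_def by blast
  show ?thesis
  proof (cases "v \<in> ?P")
    case True
    then show ?thesis by (subst R) blast
  next
    case False
    then obtain w where "w \<in> ?P" "v = (\<lambda>k. - w k)" using assms(2) R by blast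
    then show ?thesis by (simp add: pos_roots_def)
  qed
qed

lemma sign_coherent_proj: "a \<in> A \<Longrightarrow> v \<in> R a \<Longrightarrow> sign_coherent (proj i j v)"
  using root_nonneg_or_nonpos by (fastforce simp: nvec_def sign_coherent_def proj_def)

lemma proj_sigma:
  assumes "a \<in> A"
  shows "odd k \<Longrightarrow> proj i j (sigma {i, j} C i a v) = refl_step k (- C a i j) (proj i j v)"
    and "even k \<Longrightarrow> proj i j (sigma {i, j} C j a v) = refl_step k (- C a j i) (proj i j v)"
  using cartan_diag[OF assms] ij by (simp_all add: proj_def sigma_def alpha_def refl_step_def algebra_simps)

lemma roots_rho: "a \<in> A \<Longrightarrow> l \<in> {i, j} \<Longrightarrow> R (rho l a) = sigma {i, j} C l a ` R a"
  using root_system unfolding root_system_def by blast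

lemma finite_roots_rho: "a \<in> A \<Longrightarrow> l \<in> {i, j} \<Longrightarrow> finite (R a) \<Longrightarrow> finite (R (rho l a))"
  by (simp add: roots_rho)

lemma proj_image_rho:
  assumes "a \<in> A"
  shows "odd k \<Longrightarrow> proj i j ` R (rho i a) = refl_step k (- C a i j) ` proj i j ` R a"
    and "even k \<Longrightarrow> proj i j ` R (rho j a) = refl_step k (- C a j i) ` proj i j ` R a"
  using roots_rho[OF assms] proj_sigma[OF assms] by (simp_all add: image_image)

lemma scheme_path_mem: "a \<in> A \<Longrightarrow> scheme_path rho i j a k \<in> A"
  by (induction k) (simp_all add: rho_mem alt_def)

lemma root_walk_path:
  assumes "a \<in> A"
  shows "root_walk (\<lambda>k. proj i j ` R (scheme_path rho i j a k)) (path_cartan rho C i j a)"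
proof
  fix k
  have b: "scheme_path rho i j a k \<in> A" using assms by (rule scheme_path_mem)
  show "proj i j ` R (scheme_path rho i j a (Suc k))
      = refl_step (Suc k) (path_cartan rho C i j a (Suc k)) ` proj i j ` R (scheme_path rho i j a k)"
    using proj_image_rho[OF b, of "Suc k"] by (cases "odd (Suc k)") (simp_all add: path_cartan_def alt_def)
next
  fix k u assume "u \<in> proj i j ` R (scheme_path rho i j a k)"
  then show "sign_coherent u"
    using sign_coherent_proj scheme_path_mem[OF assms] by blast
next
  fix k u assume "u \<in> proj i j ` R (scheme_path rho i j a k)"
  then obtain v where "v \<in> R (scheme_path rho i j a k)" "u = proj i j v" by blast
  moreover have "- proj i j v = proj i j (\<lambda>k. - v k)" by (simp add: proj_def)
  ultimately show "- u \<in> proj i j ` R (scheme_path rho i j a k)"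
    using uminus_root scheme_path_mem[OF assms] by blast
qed (use proj_axis scheme_path_mem[OF assms] in simp_all)

lemma nvec_iff_pos_vec:
  assumes "a \<in> A" "v \<in> R a"
  shows "v \<in> nvec {i, j} \<longleftrightarrow> pos_vec (proj i j v)"
proof -
  have "v \<in> zvec {i, j}" using assms root_system unfolding root_system_def by blast
  moreover have "proj i j v \<noteq> 0" using proj_axis(1)[OF assms(1), of 0] assms(2) by (force simp: zero_prod_def)
  ultimately show ?thesis by (auto simp: nvec_def pos_vec_def proj_def)
qed

lemma card_pos_roots:
  assumes "a \<in> A"
  shows "card (pos_roots {i, j} (R a)) = card {u \<in> proj i j ` R a. pos_vec u}"
proof -
  have "proj i j ` pos_roots {i, j} (R a) = {u \<in> proj i j ` R a. pos_vec u}"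
    using nvec_iff_pos_vec[OF assms] by (auto simp: pos_roots_def)
  moreover have "inj_on (proj i j) (pos_roots {i, j} (R a))"
    using inj_on_proj[OF assms] by (rule inj_on_subset) (simp add: pos_roots_def)
  ultimately show ?thesis by (metis card_image)
qed

lemma roots_inter_span2:
  assumes "a \<in> A"
  shows "R a \<inter> span2 i j = pos_roots {i, j} (R a)"
proof -
  have "v \<in> span2 i j \<longleftrightarrow> v \<in> nvec {i, j}" if "v \<in> R a" for v
  proof
    assume "v \<in> span2 i j"
    then show "v \<in> nvec {i, j}" using ij by (auto simp: span2_def nvec_def zvec_def alpha_def)
  next
    assume "v \<in> nvec {i, j}"
    then show "v \<in> span2 i j"
      using root_eq_comb[OF assms that] unfolding span2_def nvec_def by blast
  qed
  then show ?thesis by (auto simp: pos_roots_def)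
qed

lemma finite_roots_iff: "a \<in> A \<Longrightarrow> finite (R a) \<longleftrightarrow> finite (proj i j ` R a)"
  using inj_on_proj finite_image_iff by blast

end

section \<open>The arithmetic of the finite cases\<close>

fun reaches_top_from :: "(nat \<Rightarrow> int) \<Rightarrow> nat \<Rightarrow> nat \<Rightarrow> vec \<Rightarrow> vec \<Rightarrow> bool" where
  "reaches_top_from q 0 j u w \<longleftrightarrow> pos_vec u \<and> u = (0, 1)"
| "reaches_top_from q (Suc r) j u w \<longleftrightarrow> pos_vec u \<and> reaches_top_from q r (Suc j) w (scale (q (Suc j)) w - u)"

lemma reaches_top_from_root_seq:
  "reaches_top_from q r j (root_seq q j) (root_seq q (Suc j))
     \<longleftrightarrow> (\<forall>l\<in>{j..j + r}. pos_vec (root_seq q l)) \<and> root_seq q (j + r) = (0, 1)"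
proof (induction r arbitrary: j)
  case (Suc r)
  have "{j..j + Suc r} = insert j {Suc j..Suc j + r}" by auto
  with Suc[of "Suc j"] show ?case by (simp add: root_seq_Suc_Suc)
qed simp

lemma reaches_top_code [code]:
  "reaches_top q m \<longleftrightarrow> 1 \<le> m \<and> reaches_top_from q (m - 1) 1 (1, 0) (root_seq q 2)"
proof (cases m)
  case (Suc r)
  then show ?thesis
    using reaches_top_from_root_seq[of q r 1] by (simp add: reaches_top_def numeral_2_eq_2)
qed (simp add: reaches_top_def)

text \<open>The Cartan entries met along the paths \<open>x, y, z, z, y, x, \<dots>\<close> (reflecting first in
  \<open>\<alpha>\<^sub>1\<close>) and \<open>x, x, y, z, z, y, \<dots>\<close> (first in \<open>\<alpha>\<^sub>2\<close>), indexed so that step \<open>k\<close> uses entry \<open>k mod 6\<close>.\<close>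

definition quiddity1 :: "nat \<Rightarrow> nat \<Rightarrow> nat \<Rightarrow> nat \<Rightarrow> nat \<Rightarrow> int" where
  "quiddity1 a b c d k = int ([c, a, d, b, d, a] ! (k mod 6))"

definition quiddity2 :: "nat \<Rightarrow> nat \<Rightarrow> nat \<Rightarrow> nat \<Rightarrow> nat \<Rightarrow> int" where
  "quiddity2 a b c d k = int ([a, c, a, d, b, d] ! (k mod 6))"

definition solutions :: "nat \<Rightarrow> nat \<Rightarrow> (nat \<times> nat \<times> nat \<times> nat) list" where
  "solutions m S = [(a, b, S - (2 * a + 2 * d + b), d). a \<leftarrow> [0..<S + 1], d \<leftarrow> [a..<S + 1], b \<leftarrow> [0..<S + 1],
     2 * a + 2 * d + b \<le> S \<and> reaches_top (quiddity1 a b (S - (2 * a + 2 * d + b)) d) m]"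

lemma mem_solutions:
  assumes "a \<le> d" "2 * a + 2 * d + b + c = S" "reaches_top (quiddity1 a b c d) m"
  shows "(a, b, c, d) \<in> set (solutions m S)"
proof -
  have "c = S - (2 * a + 2 * d + b)" using assms(2) by simp
  moreover have "a \<in> set [0..<S + 1]" "d \<in> set [a..<S + 1]" "b \<in> set [0..<S + 1]"
    using assms by auto
  ultimately show ?thesis using assms by (simp add: solutions_def del: upt_Suc)
qed

lemma solutions_values:
  "solutions 6 12 = [(1, 2, 4, 2), (1, 1, 3, 3)]"
  "solutions 12 15 = [(1, 3, 6, 2), (1, 4, 5, 2)]"
  "solutions 18 16 = [(1, 3, 7, 2), (1, 5, 5, 2)]"
  "solutions 36 17 = []"
  "solutions 3 6 = [(1, 0, 2, 1), (1, 1, 1, 1), (1, 2, 0, 1)]"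
  "solutions 9 14 = [(1, 3, 5, 2), (1, 1, 3, 4)]"
  by code_simp+

lemma sum_periodic:
  fixes f :: "nat \<Rightarrow> 'a::comm_semiring_1"
  assumes "\<And>j. f (j + p) = f j"
  shows "(\<Sum>j=1..p * r + s. f j) = of_nat r * (\<Sum>j=1..p. f j) + (\<Sum>j=1..s. f j)"
proof (induction r)
  case (Suc r)
  have "p * Suc r + s = p + (p * r + s)" by simp
  then have "(\<Sum>j=1..p * Suc r + s. f j) = (\<Sum>j=1..p + (p * r + s). f j)" by (simp only:)
  also have "\<dots> = (\<Sum>j=1..p. f j) + (\<Sum>j=p+1..p + (p * r + s). f j)"
    by (rule sum.ub_add_nat) simp
  also have "(\<Sum>j=p+1..p + (p * r + s). f j) = (\<Sum>j=1..p * r + s. f j)"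
    using sum.shift_bounds_cl_nat_ivl[of f 1 p "p * r + s"] assms by (simp add: add.commute)
  finally show ?case using Suc by (simp add: algebra_simps)
qed simp

lemma quiddity_periodic:
  "quiddity1 a b c d (j + 6) = quiddity1 a b c d j" "quiddity2 a b c d (j + 6) = quiddity2 a b c d j"
  by (simp_all add: quiddity1_def quiddity2_def)

lemma quiddity_period_sums:
  "(\<Sum>j=1..6. quiddity1 a b c d j) = int (2 * a + 2 * d + b + c)"
  "(\<Sum>j=1..6. quiddity2 a b c d j) = int (2 * a + 2 * d + b + c)"
  "(\<Sum>j=1..3. quiddity1 a b c d j) = int (a + d + b)"
  "(\<Sum>j=1..3. quiddity2 a b c d j) = int (c + a + d)"
proof -
  have "{1..6::nat} = {1, 2, 3, 4, 5, 6}" "{1..3::nat} = {1, 2, 3}" by auto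
  then show "(\<Sum>j=1..6. quiddity1 a b c d j) = int (2 * a + 2 * d + b + c)"
    "(\<Sum>j=1..6. quiddity2 a b c d j) = int (2 * a + 2 * d + b + c)"
    "(\<Sum>j=1..3. quiddity1 a b c d j) = int (a + d + b)"
    "(\<Sum>j=1..3. quiddity2 a b c d j) = int (c + a + d)"
    by (simp_all add: quiddity1_def quiddity2_def)
qed

lemma quiddity_sums:
  fixes a b c d r :: nat
  shows "(\<Sum>j=1..6 * r. quiddity1 a b c d j) = int r * int (2 * a + 2 * d + b + c)"
    "(\<Sum>j=1..6 * r + 3. quiddity1 a b c d j) = int r * int (2 * a + 2 * d + b + c) + int (a + d + b)"
    "(\<Sum>j=1..6 * r + 3. quiddity2 a b c d j) = int r * int (2 * a + 2 * d + b + c) + int (c + a + d)"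
  using sum_periodic[of "quiddity1 a b c d" 6 r 0] sum_periodic[of "quiddity1 a b c d" 6 r 3]
    sum_periodic[of "quiddity2 a b c d" 6 r 3] quiddity_period_sums[of a b c d]
  by (simp_all add: quiddity_periodic)

lemma six_r_cases:
  fixes r S :: nat
  assumes "r * S + 6 = 18 * r"
  shows "r = 1 \<and> S = 12 \<or> r = 2 \<and> S = 15 \<or> r = 3 \<and> S = 16 \<or> r = 6 \<and> S = 17"
proof -
  have "r * (18 - S) = r * 18 - r * S" by (rule diff_mult_distrib2)
  also have "\<dots> = 6" using assms by simp
  finally have "r * (18 - S) = 6" .
  then have "r dvd 6" by (metis dvd_triv_left)
  then have "r \<le> 6" by (simp add: dvd_imp_le)
  then have "r = 0 \<or> r = 1 \<or> r = 2 \<or> r = 3 \<or> r = 4 \<or> r = 5 \<or> r = 6" by presburger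
  then show ?thesis using \<open>r * (18 - S) = 6\<close> by (elim disjE) (simp_all, presburger+)
qed

lemma six_r_three_cases:
  fixes r T :: nat
  assumes "(2 * r + 1) * T = 18 * r + 3"
  shows "r = 0 \<and> T = 3 \<or> r = 1 \<and> T = 7"
proof -
  have "(2 * r + 1) * (9 - T) = (2 * r + 1) * 9 - (2 * r + 1) * T" by (rule diff_mult_distrib2)
  also have "\<dots> = 6" using assms by simp
  finally have "(2 * r + 1) * (9 - T) = 6" .
  then have "2 * r + 1 dvd 6" by (metis dvd_triv_left)
  then have "2 * r + 1 \<le> 6" using dvd_imp_le[of "2 * r + 1" 6] by simp
  then have "r = 0 \<or> r = 1 \<or> r = 2" by presburger
  then show ?thesis using \<open>(2 * r + 1) * (9 - T) = 6\<close> by (elim disjE) (simp_all, presburger+)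
qed

definition finite_types :: "(nat \<times> nat \<times> nat \<times> nat \<times> nat) list" where
  "finite_types = [(1, 1, 1, 1, 3), (1, 1, 3, 3, 6), (1, 2, 4, 2, 6), (1, 3, 6, 2, 12),
     (1, 4, 5, 2, 12), (1, 3, 7, 2, 18), (1, 5, 5, 2, 18)]"

lemma finite_types_reach_top:
  "(a, b, c, d, m) \<in> set finite_types \<Longrightarrow> reaches_top (quiddity1 a b c d) m"
proof -
  have "\<forall>(a, b, c, d, m) \<in> set finite_types. reaches_top (quiddity1 a b c d) m"
    by code_simp
  then show "(a, b, c, d, m) \<in> set finite_types \<Longrightarrow> reaches_top (quiddity1 a b c d) m"
    by fastforce
qed

lemma classification:
  fixes a b c d m :: nat
  assumes "a \<le> d" "3 dvd m" "2 \<le> m"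
    and sum1: "(\<Sum>j=1..m. quiddity1 a b c d j) = 3 * int m - 6"
    and sum2: "(\<Sum>j=1..m. quiddity2 a b c d j) = 3 * int m - 6"
    and reach: "reaches_top (quiddity1 a b c d) m"
  shows "(a, b, c, d, m) \<in> set finite_types"
proof -
  define S where "S = 2 * a + 2 * d + b + c"
  have sol: "(a, b, c, d) \<in> set (solutions m S)"
    using mem_solutions assms(1) reach by (simp add: S_def)
  have "m = 6 * (m div 6) \<or> m = 6 * (m div 6) + 3" using \<open>3 dvd m\<close> by presburger
  then obtain r where "m = 6 * r \<or> m = 6 * r + 3" by blast
  then show ?thesis
  proof
    assume m: "m = 6 * r"
    then have "int (r * S + 6) = int (18 * r)"
      using sum1 quiddity_sums(1)[of a b c d r] \<open>2 \<le> m\<close> by (simp add: S_def)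
    then have "r * S + 6 = 18 * r" by (simp only: of_nat_eq_iff)
    then have "r = 1 \<and> S = 12 \<or> r = 2 \<and> S = 15 \<or> r = 3 \<and> S = 16 \<or> r = 6 \<and> S = 17"
      by (rule six_r_cases)
    then show ?thesis using sol m by (elim disjE) (auto simp: solutions_values finite_types_def)
  next
    assume m: "m = 6 * r + 3"
    then have "int r * int S + int (a + d + b) = 18 * int r + 3"
      "int r * int S + int (c + a + d) = 18 * int r + 3"
      using sum1 sum2 quiddity_sums(2,3)[of a b c d r] by (simp_all add: S_def)
    then have "b = c" by simp
    then have "int ((2 * r + 1) * (a + b + d)) = int (18 * r + 3)"
      using \<open>int r * int S + int (a + d + b) = 18 * int r + 3\<close> by (simp add: S_def algebra_simps)
    then have "(2 * r + 1) * (a + b + d) = 18 * r + 3" by (simp only: of_nat_eq_iff)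
    then have "r = 0 \<and> a + b + d = 3 \<or> r = 1 \<and> a + b + d = 7" by (rule six_r_three_cases)
    then have "m = 3 \<and> S = 6 \<or> m = 9 \<and> S = 14" using m \<open>b = c\<close> by (auto simp: S_def)
    then show ?thesis using sol \<open>b = c\<close>
      by (elim disjE) (auto simp: solutions_values finite_types_def)
  qed
qed

section \<open>The Cartan scheme with three objects\<close>

lemma funpow_three_cycle_dvd:
  assumes "f u = v" "f v = w" "f w = u" "u \<noteq> v" "u \<noteq> w" "(f ^^ n) u = u"
  shows "3 dvd n"
proof -
  have "(f ^^ n) u = (if n mod 3 = 0 then u else if n mod 3 = 1 then v else w)" for n
  proof (induction n)
    case (Suc n)
    have "n mod 3 = 0 \<and> Suc n mod 3 = 1 \<or> n mod 3 = 1 \<and> Suc n mod 3 = 2 \<or> n mod 3 = 2 \<and> Suc n mod 3 = 0"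
      by presburger
    then show ?case using Suc assms(1-3) by auto
  qed simp
  then show ?thesis using assms(4-6) by (metis dvd_eq_mod_eq_0)
qed

lemma mod6_Suc_cases:
  obtains "k mod 6 = 0" "Suc k mod 6 = 1" "odd (Suc k)"
  | "k mod 6 = 1" "Suc k mod 6 = 2" "even (Suc k)"
  | "k mod 6 = 2" "Suc k mod 6 = 3" "odd (Suc k)"
  | "k mod 6 = 3" "Suc k mod 6 = 4" "even (Suc k)"
  | "k mod 6 = 4" "Suc k mod 6 = 5" "odd (Suc k)"
  | "k mod 6 = 5" "Suc k mod 6 = 0" "even (Suc k)"
proof -
  have "k mod 6 = 0 \<and> Suc k mod 6 = 1 \<and> odd (Suc k) \<or> k mod 6 = 1 \<and> Suc k mod 6 = 2 \<and> even (Suc k)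
    \<or> k mod 6 = 2 \<and> Suc k mod 6 = 3 \<and> odd (Suc k) \<or> k mod 6 = 3 \<and> Suc k mod 6 = 4 \<and> even (Suc k)
    \<or> k mod 6 = 4 \<and> Suc k mod 6 = 5 \<and> odd (Suc k) \<or> k mod 6 = 5 \<and> Suc k mod 6 = 0 \<and> even (Suc k)"
    by presburger
  then show ?thesis using that by (elim disjE conjE) blast+
qed

locale three_object_scheme =
  fixes x y z :: 'a
    and rho :: "nat \<Rightarrow> 'a \<Rightarrow> 'a"
    and C :: "'a \<Rightarrow> nat \<Rightarrow> nat \<Rightarrow> int"
    and R :: "'a \<Rightarrow> (nat \<Rightarrow> int) set"
    and a b c d :: nat
  assumes dist: "x \<noteq> y" "y \<noteq> z" "x \<noteq> z"
    and rho1: "rho 1 x = y" "rho 1 y = x" "rho 1 z = z"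
    and rho2: "rho 2 x = x" "rho 2 y = z" "rho 2 z = y"
    and ad: "a \<le> d"
    and Cx: "C x 1 1 = 2" "C x 1 2 = - int a" "C x 2 1 = - int c" "C x 2 2 = 2"
    and Cy: "C y 1 1 = 2" "C y 1 2 = - int a" "C y 2 1 = - int d" "C y 2 2 = 2"
    and Cz: "C z 1 1 = 2" "C z 1 2 = - int b" "C z 2 1 = - int d" "C z 2 2 = 2"
    and rs: "root_system {1, 2} {x, y, z} rho C R"
begin

sublocale R12: rank2_root_system 1 2 "{x, y, z}" rho C R
  using rs by unfold_locales simp_all

sublocale R21: rank2_root_system 2 1 "{x, y, z}" rho C R
  using rs by unfold_locales (simp_all add: insert_commute)

lemma path12: "scheme_path rho 1 2 x k = [x, y, z, z, y, x] ! (k mod 6)"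
proof (induction k)
  case (Suc k)
  from mod6_Suc_cases[of k] show ?case by cases (simp_all del: One_nat_def add: Suc.IH alt_def rho1 rho2)
qed simp

lemma path21: "scheme_path rho 2 1 x k = [x, x, y, z, z, y] ! (k mod 6)"
proof (induction k)
  case (Suc k)
  from mod6_Suc_cases[of k] show ?case by cases (simp_all del: One_nat_def add: Suc.IH alt_def rho1 rho2)
qed simp

lemma path_cartan12: "path_cartan rho C 1 2 x = quiddity1 a b c d"
proof
  fix k show "path_cartan rho C 1 2 x k = quiddity1 a b c d k"
  proof (cases k)
    case (Suc l)
    then show ?thesis
      by (rule_tac mod6_Suc_cases[of l])
        (simp_all del: One_nat_def add: path_cartan_def quiddity1_def path12 alt_def Cx Cy Cz)
  qed (simp del: One_nat_def add: path_cartan_def quiddity1_def alt_def Cx)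
qed

lemma path_cartan21: "path_cartan rho C 2 1 x = quiddity2 a b c d"
proof
  fix k show "path_cartan rho C 2 1 x k = quiddity2 a b c d k"
  proof (cases k)
    case (Suc l)
    then show ?thesis
      by (rule_tac mod6_Suc_cases[of l])
        (simp_all del: One_nat_def add: path_cartan_def quiddity2_def path21 alt_def Cx Cy Cz)
  qed (simp del: One_nat_def add: path_cartan_def quiddity2_def alt_def Cx)
qed

lemma walk12: "root_walk (\<lambda>k. proj 1 2 ` R (scheme_path rho 1 2 x k)) (quiddity1 a b c d)"
  using R12.root_walk_path[of x] unfolding path_cartan12 by simp

lemma walk21: "root_walk (\<lambda>k. proj 2 1 ` R (scheme_path rho 2 1 x k)) (quiddity2 a b c d)"
  using R21.root_walk_path[of x] unfolding path_cartan21 by simp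

lemma three_dvd_card_pos_roots:
  assumes "finite (R x)"
  shows "3 dvd card (pos_roots {1, 2} (R x))"
proof -
  have "finite (R x \<inter> span2 1 2)" using assms by simp
  then have "((rho 1 \<circ> rho 2) ^^ card (R x \<inter> span2 1 2)) x = x"
    using rs unfolding root_system_def by force
  then show ?thesis
    using funpow_three_cycle_dvd[of "rho 1 \<circ> rho 2" x y z] R12.roots_inter_span2[of x] rho1 rho2 dist
    by simp
qed

lemma finite_classification:
  assumes "finite (R x)"
  shows "(a, b, c, d, card (pos_roots {1, 2} (R x))) \<in> set finite_types"
proof -
  interpret W12: root_walk "\<lambda>k. proj 1 2 ` R (scheme_path rho 1 2 x k)" "quiddity1 a b c d"
    by (rule walk12)
  interpret W21: root_walk "\<lambda>k. proj 2 1 ` R (scheme_path rho 2 1 x k)" "quiddity2 a b c d"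
    by (rule walk21)
  have "finite (proj 1 2 ` R x)" "finite (proj 2 1 ` R x)"
    using assms by simp_all
  then obtain m m' where m: "2 \<le> m" "reaches_top (quiddity1 a b c d) m"
      "root_seq (quiddity1 a b c d) (Suc m) = (-1, 0)"
    and m': "2 \<le> m'" "reaches_top (quiddity2 a b c d) m'"
      "root_seq (quiddity2 a b c d) (Suc m') = (-1, 0)"
    using W12.finite_reaches_top W21.finite_reaches_top by fastforce
  have card: "card (pos_roots {1, 2} (R x)) = m"
    using R12.card_pos_roots[of x] W12.card_positive_roots[of m] m by simp
  moreover have "card (pos_roots {1, 2} (R x)) = m'"
    using R21.card_pos_roots[of x] W21.card_positive_roots[of m'] m' by (simp add: insert_commute)
  ultimately have "m' = m" by simp
  have "3 dvd m" using three_dvd_card_pos_roots[OF assms] card by simp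
  moreover have "(\<Sum>j=1..m. quiddity1 a b c d j) = 3 * int m - 6"
    using quiddity_chain_sum quiddity_chain_root_seq m by blast
  moreover have "(\<Sum>j=1..m. quiddity2 a b c d j) = 3 * int m - 6"
    using quiddity_chain_sum quiddity_chain_root_seq m' \<open>m' = m\<close> by blast
  ultimately show ?thesis using classification ad m card by simp
qed

lemma finite_if_type:
  assumes "(a, b, c, d, m) \<in> set finite_types"
  shows "finite_root_system {x, y, z} R"
proof -
  interpret W12: root_walk "\<lambda>k. proj 1 2 ` R (scheme_path rho 1 2 x k)" "quiddity1 a b c d"
    by (rule walk12)
  have "1 \<le> m" using assms by (auto simp: finite_types_def)
  then have "finite (proj 1 2 ` R x)"
    using W12.finite_if_reaches_top finite_types_reach_top[OF assms] by simp
  then have "finite (R x)" using R12.finite_roots_iff[of x] by simp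
  moreover from this have "finite (R y)" using R12.finite_roots_rho[of x 1] rho1 by simp
  moreover from this have "finite (R z)" using R12.finite_roots_rho[of y 2] rho2 by simp
  ultimately show ?thesis by (simp add: finite_root_system_def)
qed

end

theorem theorem6p1:
  fixes x y z :: 'a
    and rho :: "nat \<Rightarrow> 'a \<Rightarrow> 'a"
    and C :: "'a \<Rightarrow> nat \<Rightarrow> nat \<Rightarrow> int"
    and R :: "'a \<Rightarrow> (nat \<Rightarrow> int) set"
    and a b c d :: nat
  assumes dist: "x \<noteq> y" "y \<noteq> z" "x \<noteq> z"
    and cs: "cartan_scheme {1, 2} {x, y, z} rho C"
    and rho1: "rho 1 x = y" "rho 1 y = x" "rho 1 z = z"
    and rho2: "rho 2 x = x" "rho 2 y = z" "rho 2 z = y"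
    and ad: "a \<le> d"
    and Cx: "C x 1 1 = 2" "C x 1 2 = - int a" "C x 2 1 = - int c" "C x 2 2 = 2"
    and Cy: "C y 1 1 = 2" "C y 1 2 = - int a" "C y 2 1 = - int d" "C y 2 2 = 2"
    and Cz: "C z 1 1 = 2" "C z 1 2 = - int b" "C z 2 1 = - int d" "C z 2 2 = 2"
    and rs: "root_system {1, 2} {x, y, z} rho C R"
  shows "(finite_root_system {x, y, z} R \<longrightarrow>
            ((a, b, c, d) = (1, 1, 1, 1) \<and> card (pos_roots {1, 2} (R x)) = 3)
          \<or> ((a, b, c, d) = (1, 1, 3, 3) \<and> card (pos_roots {1, 2} (R x)) = 6)
          \<or> ((a, b, c, d) = (1, 2, 4, 2) \<and> card (pos_roots {1, 2} (R x)) = 6)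
          \<or> ((a, b, c, d) = (1, 3, 6, 2) \<and> card (pos_roots {1, 2} (R x)) = 12)
          \<or> ((a, b, c, d) = (1, 4, 5, 2) \<and> card (pos_roots {1, 2} (R x)) = 12)
          \<or> ((a, b, c, d) = (1, 3, 7, 2) \<and> card (pos_roots {1, 2} (R x)) = 18)
          \<or> ((a, b, c, d) = (1, 5, 5, 2) \<and> card (pos_roots {1, 2} (R x)) = 18))
       \<and> ((a, b, c, d) \<in> {(1, 1, 1, 1), (1, 1, 3, 3), (1, 2, 4, 2), (1, 3, 6, 2),
                          (1, 4, 5, 2), (1, 3, 7, 2), (1, 5, 5, 2)}
          \<longrightarrow> finite_root_system {x, y, z} R)"
proof -
  interpret three_object_scheme x y z rho C R a b c d
    using dist rho1 rho2 ad Cx Cy Cz rs by unfold_locales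
  have "finite_root_system {x, y, z} R \<Longrightarrow>
      (a, b, c, d, card (pos_roots {1, 2} (R x))) \<in> set finite_types"
    by (rule finite_classification) (simp add: finite_root_system_def)
  moreover have "(a, b, c, d) \<in> {(1, 1, 1, 1), (1, 1, 3, 3), (1, 2, 4, 2), (1, 3, 6, 2),
      (1, 4, 5, 2), (1, 3, 7, 2), (1, 5, 5, 2)} \<Longrightarrow> \<exists>m. (a, b, c, d, m) \<in> set finite_types"
    by (auto simp: finite_types_def)
  ultimately show ?thesis using finite_if_type by (auto simp: finite_types_def)
qed

end
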